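(* Let $v_1,\ldots,v_n$ ($n\ge2$) be an MA-ordering of a capacitated hypergraph $H$, and let $\beta=\min_{1<i\le n}d(V_{i-1},v_i)$. Then $\beta\le\lambda(H)\le n\beta$.
   Context: A hypergraph $H=(V,E)$ has finite vertex set $V$, a finite multiset $E$ of edges (subsets of $V$) and capacities $c:E\to\mathbb{R}_{\ge0}$. $c(S)$ is the total capacity of edges meeting both $S$ and $V\setminus S$, and $\lambda(H)=\min_{\emptyset\ne S\subsetneq V}c(S)$. For subsets $A_1,\ldots,A_k$, $d(A_1,\ldots,A_k)$ is the total capacity of edges meeting every $A_i$ (a vertex $v$ stands for $\{v\}$). $V_i=\{v_1,\ldots,v_i\}$; the ordering is an MA-ordering if $d(V_{i-1},v_i)\ge d(V_{i-1},v_j)$ for all $1\le i<j\le n$. *)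

theory Defs
  imports Complex_Main
begin

text \<open>A capacitated hypergraph is given by a finite vertex set V, a finite index set E of
edges (so that E behaves as a multiset: distinct indices may carry the same vertex set),
a map edge assigning to each index its vertex set, and capacities c.\<close>

definition hypergraph :: "'v set \<Rightarrow> 'e set \<Rightarrow> ('e \<Rightarrow> 'v set) \<Rightarrow> ('e \<Rightarrow> real) \<Rightarrow> bool" where
  "hypergraph V E edge c \<longleftrightarrow> finite V \<and> finite E \<and> (\<forall>e\<in>E. edge e \<subseteq> V) \<and> (\<forall>e\<in>E. c e \<ge> 0)"

definition cut_cap :: "'v set \<Rightarrow> 'e set \<Rightarrow> ('e \<Rightarrow> 'v set) \<Rightarrow> ('e \<Rightarrow> real) \<Rightarrow> 'v set \<Rightarrow> real" where
  "cut_cap V E edge c S = (\<Sum>e\<in>{e\<in>E. edge e \<inter> S \<noteq> {} \<and> edge e \<inter> (V - S) \<noteq> {}}. c e)"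

definition hg_lambda :: "'v set \<Rightarrow> 'e set \<Rightarrow> ('e \<Rightarrow> 'v set) \<Rightarrow> ('e \<Rightarrow> real) \<Rightarrow> real" where
  "hg_lambda V E edge c = Min {cut_cap V E edge c S | S. S \<noteq> {} \<and> S \<subset> V}"

definition dcap :: "'e set \<Rightarrow> ('e \<Rightarrow> 'v set) \<Rightarrow> ('e \<Rightarrow> real) \<Rightarrow> 'v set list \<Rightarrow> real" where
  "dcap E edge c As = (\<Sum>e\<in>{e\<in>E. \<forall>A\<in>set As. edge e \<inter> A \<noteq> {}}. c e)"

text \<open>Ordering v_1,...,v_n given as a list vs; v_i = vs ! (i-1), V_i = set (take i vs).\<close>
definition vtx :: "'v list \<Rightarrow> nat \<Rightarrow> 'v" where
  "vtx vs i = vs ! (i - 1)"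

definition pre :: "'v list \<Rightarrow> nat \<Rightarrow> 'v set" where
  "pre vs i = set (take i vs)"

definition ordering_of :: "'v set \<Rightarrow> 'v list \<Rightarrow> bool" where
  "ordering_of V vs \<longleftrightarrow> distinct vs \<and> set vs = V"

definition MA_ordering :: "'v set \<Rightarrow> 'e set \<Rightarrow> ('e \<Rightarrow> 'v set) \<Rightarrow> ('e \<Rightarrow> real) \<Rightarrow> 'v list \<Rightarrow> bool" where
  "MA_ordering V E edge c vs \<longleftrightarrow> ordering_of V vs \<and>
     (\<forall>i j. 1 \<le> i \<and> i < j \<and> j \<le> length vs \<longrightarrow>
        dcap E edge c [pre vs (i - 1), {vtx vs i}] \<ge> dcap E edge c [pre vs (i - 1), {vtx vs j}])"

end

theory Submission
  imports Defs
begin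

(*
  Lower bound: given a cut S, pass to V - S if necessary so that v_1 \<in> S, and let v_i be
  the first vertex outside S. Every edge meeting V_(i-1) and v_i crosses S, hence
  \<beta> \<le> d(V_(i-1), v_i) \<le> c(S).
  Upper bound: choose i with d(V_(i-1), v_i) = \<beta> and cut at S = V_(i-1). Each crossing edge
  meets S and some v \<notin> S, so c(S) \<le> \<Sum> (v \<notin> S) d(S, v), and the MA property bounds every
  term by d(V_(i-1), v_i) = \<beta>.
*)

lemma dcap_nonneg:
  assumes "hypergraph V E edge c"
  shows "0 \<le> dcap E edge c As"
  using assms unfolding hypergraph_def dcap_def by (auto intro: sum_nonneg)

lemma cut_cap_complement:
  assumes "hypergraph V E edge c"
  shows "cut_cap V E edge c (V - S) = cut_cap V E edge c S"
proof -
  have "edge e \<inter> (V - (V - S)) = edge e \<inter> S" if "e \<in> E" for e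
    using assms that unfolding hypergraph_def by auto
  then show ?thesis
    unfolding cut_cap_def by (intro sum.cong) auto
qed

lemma dcap_le_cut_cap:
  assumes "hypergraph V E edge c" "A \<subseteq> S" "v \<in> V" "v \<notin> S"
  shows "dcap E edge c [A, {v}] \<le> cut_cap V E edge c S"
  unfolding dcap_def cut_cap_def
  using assms unfolding hypergraph_def by (intro sum_mono2) auto

text \<open>Union bound: charge each crossing edge to one of its vertices outside S.\<close>
lemma cut_cap_le_sum_dcap:
  assumes "hypergraph V E edge c"
  shows "cut_cap V E edge c S \<le> (\<Sum>v\<in>V - S. dcap E edge c [S, {v}])"
proof -
  have finV: "finite V" and finE: "finite E" and nonneg: "\<And>e. e \<in> E \<Longrightarrow> 0 \<le> c e"
    using assms unfolding hypergraph_def by auto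
  define T where "T = Sigma (V - S) (\<lambda>v. {e \<in> E. \<forall>A\<in>set [S, {v}]. edge e \<inter> A \<noteq> {}})"
  have "cut_cap V E edge c S \<le> (\<Sum>(v, e)\<in>T. c e)"
    unfolding cut_cap_def
  proof (rule sum_le_included[where i = snd])
    show "finite T" unfolding T_def using finV finE by auto
  qed (use finE nonneg in \<open>auto simp: T_def\<close>)
  also have "\<dots> = (\<Sum>v\<in>V - S. dcap E edge c [S, {v}])"
    unfolding T_def dcap_def using finV finE by (subst sum.Sigma) auto
  finally show ?thesis .
qed

lemma finite_cut_caps:
  assumes "finite V"
  shows "finite {cut_cap V E edge c S | S. S \<noteq> {} \<and> S \<subset> V}"
proof -
  have "{cut_cap V E edge c S | S. S \<noteq> {} \<and> S \<subset> V} \<subseteq> cut_cap V E edge c ` Pow V" by auto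
  then show ?thesis by (rule finite_subset) (simp add: assms)
qed

lemma hg_lambda_le_cut_cap:
  assumes "hypergraph V E edge c" "S \<noteq> {}" "S \<subset> V"
  shows "hg_lambda V E edge c \<le> cut_cap V E edge c S"
proof -
  have "finite V" using assms(1) unfolding hypergraph_def by simp
  then show ?thesis
    unfolding hg_lambda_def using assms(2,3) by (intro Min_le finite_cut_caps) auto
qed

lemma le_hg_lambda:
  assumes "hypergraph V E edge c" "2 \<le> card V"
    and "\<And>S. S \<noteq> {} \<Longrightarrow> S \<subset> V \<Longrightarrow> b \<le> cut_cap V E edge c S"
  shows "b \<le> hg_lambda V E edge c"
proof -
  have "finite V" using assms(1) unfolding hypergraph_def by simp
  obtain x where "x \<in> V" using assms(2) by fastforce
  with assms(2) have "{x} \<subset> V" by auto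
  show ?thesis
    unfolding hg_lambda_def
  proof (rule Min.boundedI[OF finite_cut_caps[OF \<open>finite V\<close>]])
    show "{cut_cap V E edge c S | S. S \<noteq> {} \<and> S \<subset> V} \<noteq> {}"
      using \<open>{x} \<subset> V\<close> by blast
  qed (use assms(3) in blast)
qed

lemma first_vertex_outside:
  assumes "vs ! 0 \<in> S" "\<not> set vs \<subseteq> S"
  obtains i where "1 < i" "i \<le> length vs" "pre vs (i - 1) \<subseteq> S" "vtx vs i \<notin> S"
proof
  define k where "k = length (takeWhile (\<lambda>x. x \<in> S) vs)"
  have "takeWhile (\<lambda>x. x \<in> S) vs \<noteq> vs"
    using assms(2) by (auto simp: takeWhile_eq_all_conv)
  then have "k < length vs"
    unfolding k_def by (metis takeWhile_eq_take length_takeWhile_le le_neq_implies_less take_all)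
  then show "Suc k \<le> length vs" by simp
  show "vtx vs (Suc k) \<notin> S"
    using \<open>k < length vs\<close> nth_length_takeWhile[of "\<lambda>x. x \<in> S" vs]
    unfolding vtx_def k_def by simp
  show "pre vs (Suc k - 1) \<subseteq> S"
    unfolding pre_def k_def by (auto simp: takeWhile_eq_take[symmetric] dest: set_takeWhileD)
  have "vs \<noteq> []" using assms(2) by auto
  then have "k \<noteq> 0" unfolding k_def using assms(1) by (cases vs) auto
  then show "1 < Suc k" by simp
qed

lemma prefix_dcap_le_cut_cap:
  assumes "hypergraph V E edge c" "ordering_of V vs" "S \<noteq> {}" "S \<subset> V"
  obtains i where "1 < i" "i \<le> length vs"
    "dcap E edge c [pre vs (i - 1), {vtx vs i}] \<le> cut_cap V E edge c S"
proof -
  have setvs: "set vs = V" using assms(2) unfolding ordering_of_def by simp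
  have vtx_in: "vtx vs i \<in> V" if "1 \<le> i" "i \<le> length vs" for i
    using that setvs unfolding vtx_def by auto
  have "vs \<noteq> []" using assms(3,4) setvs by auto
  then have "vs ! 0 \<in> V" using setvs by auto
  then consider "vs ! 0 \<in> S" | "vs ! 0 \<in> V - S" by blast
  then show ?thesis
  proof cases
    case 1
    moreover have "\<not> set vs \<subseteq> S" using assms(4) setvs by auto
    ultimately obtain i where i: "1 < i" "i \<le> length vs" "pre vs (i - 1) \<subseteq> S" "vtx vs i \<notin> S"
      by (rule first_vertex_outside)
    have "dcap E edge c [pre vs (i - 1), {vtx vs i}] \<le> cut_cap V E edge c S"
      using i by (intro dcap_le_cut_cap[OF assms(1)] vtx_in) simp_all
    with i(1,2) show ?thesis by (rule that)
  next
    case 2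
    moreover have "\<not> set vs \<subseteq> V - S" using assms(3,4) setvs by auto
    ultimately obtain i where i: "1 < i" "i \<le> length vs" "pre vs (i - 1) \<subseteq> V - S" "vtx vs i \<notin> V - S"
      by (rule first_vertex_outside)
    have "dcap E edge c [pre vs (i - 1), {vtx vs i}] \<le> cut_cap V E edge c (V - S)"
      using i by (intro dcap_le_cut_cap[OF assms(1)] vtx_in) simp_all
    with i(1,2) show ?thesis
      unfolding cut_cap_complement[OF assms(1)] by (rule that)
  qed
qed

lemma MA_ordering_dcap_le:
  assumes "MA_ordering V E edge c vs" "1 \<le> i" "i \<le> length vs" "v \<in> V - pre vs (i - 1)"
  shows "dcap E edge c [pre vs (i - 1), {v}] \<le> dcap E edge c [pre vs (i - 1), {vtx vs i}]"
proof -
  have "set vs = V" using assms(1) unfolding MA_ordering_def ordering_of_def by simp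
  then obtain m where m: "m < length vs" "vs ! m = v"
    using assms(4) by (auto simp: in_set_conv_nth)
  have "\<not> m < i - 1"
    using assms(4) m unfolding pre_def by (auto simp: in_set_conv_nth)
  then consider "m = i - 1" | "i < Suc m" by linarith
  then show ?thesis
  proof cases
    case 1
    then show ?thesis using m assms(2) unfolding vtx_def by simp
  next
    case 2
    then show ?thesis
      using assms(1-2) m unfolding MA_ordering_def vtx_def by (metis diff_Suc_1 Suc_leI)
  qed
qed

lemma pre_nonempty_psubset:
  assumes "ordering_of V vs" "1 < i" "i \<le> length vs"
  shows "pre vs (i - 1) \<noteq> {}" "pre vs (i - 1) \<subset> V"
proof -
  have "take (i - 1) vs ! 0 \<in> pre vs (i - 1)"
    unfolding pre_def using assms(2,3) by (intro nth_mem) simp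
  then show "pre vs (i - 1) \<noteq> {}" by auto
  have "vtx vs i \<notin> pre vs (i - 1)"
    using assms unfolding ordering_of_def pre_def vtx_def
    by (auto simp: in_set_conv_nth nth_eq_iff_index_eq)
  moreover have "vtx vs i \<in> V" "pre vs (i - 1) \<subseteq> V"
    using assms unfolding ordering_of_def pre_def vtx_def by (auto dest: in_set_takeD)
  ultimately show "pre vs (i - 1) \<subset> V" by blast
qed

lemma cut_cap_prefix_le:
  assumes "hypergraph V E edge c" "MA_ordering V E edge c vs" "1 \<le> i" "i \<le> length vs"
  shows "cut_cap V E edge c (pre vs (i - 1))
           \<le> real (length vs) * dcap E edge c [pre vs (i - 1), {vtx vs i}]"
proof -
  let ?S = "pre vs (i - 1)"
  let ?d = "dcap E edge c [pre vs (i - 1), {vtx vs i}]"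
  have "finite V" using assms(1) unfolding hypergraph_def by simp
  have "card V = length vs"
    using assms(2) distinct_card unfolding MA_ordering_def ordering_of_def by metis
  have "cut_cap V E edge c ?S \<le> (\<Sum>v\<in>V - ?S. dcap E edge c [?S, {v}])"
    by (rule cut_cap_le_sum_dcap[OF assms(1)])
  also have "\<dots> \<le> (\<Sum>v\<in>V - ?S. ?d)"
    by (intro sum_mono MA_ordering_dcap_le[OF assms(2-4)])
  also have "\<dots> = real (card (V - ?S)) * ?d" by simp
  also have "\<dots> \<le> real (length vs) * ?d"
    using \<open>finite V\<close> \<open>card V = length vs\<close> dcap_nonneg[OF assms(1)]
    by (intro mult_right_mono) (auto simp flip: \<open>card V = length vs\<close> intro: card_mono)
  finally show ?thesis .
qed

theorem mainTheorem20:
  fixes V :: "'v set" and E :: "'e set" and edge :: "'e \<Rightarrow> 'v set" and c :: "'e \<Rightarrow> real"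
    and vs :: "'v list" and \<beta> :: real
  assumes "hypergraph V E edge c"
    and "length vs \<ge> 2"
    and "MA_ordering V E edge c vs"
    and "\<beta> = Min {dcap E edge c [pre vs (i - 1), {vtx vs i}] | i. 1 < i \<and> i \<le> length vs}"
  shows "\<beta> \<le> hg_lambda V E edge c \<and> hg_lambda V E edge c \<le> real (length vs) * \<beta>"
proof
  define B where "B = {dcap E edge c [pre vs (i - 1), {vtx vs i}] | i. 1 < i \<and> i \<le> length vs}"
  have ord: "ordering_of V vs" using assms(3) unfolding MA_ordering_def by simp
  have "finite B"
    unfolding B_def by (rule finite_image_set) simp
  then have \<beta>_le: "\<beta> \<le> dcap E edge c [pre vs (i - 1), {vtx vs i}]" if "1 < i" "i \<le> length vs" for i
    unfolding assms(4) B_def[symmetric] using that by (intro Min_le) (auto simp: B_def)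
  have "card V = length vs"
    using ord distinct_card unfolding ordering_of_def by metis
  show "\<beta> \<le> hg_lambda V E edge c"
  proof (rule le_hg_lambda[OF assms(1)])
    show "2 \<le> card V" using assms(2) \<open>card V = length vs\<close> by simp
    fix S assume "S \<noteq> {}" "S \<subset> V"
    then show "\<beta> \<le> cut_cap V E edge c S"
      by (rule prefix_dcap_le_cut_cap[OF assms(1) ord]) (use \<beta>_le in force)
  qed
  have "\<beta> \<in> B"
    unfolding assms(4) B_def[symmetric] using \<open>finite B\<close> assms(2) by (intro Min_in) (auto simp: B_def)
  then obtain i where i: "1 < i" "i \<le> length vs" "\<beta> = dcap E edge c [pre vs (i - 1), {vtx vs i}]"
    unfolding B_def by blast
  have "hg_lambda V E edge c \<le> cut_cap V E edge c (pre vs (i - 1))"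
    using pre_nonempty_psubset[OF ord i(1,2)] by (intro hg_lambda_le_cut_cap[OF assms(1)])
  also have "\<dots> \<le> real (length vs) * \<beta>"
    unfolding i(3) using i(1,2) by (intro cut_cap_prefix_le[OF assms(1,3)]) simp_all
  finally show "hg_lambda V E edge c \<le> real (length vs) * \<beta>" .
qed

end
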